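(* Let $R$ be an arithmetic ring with Jacobson radical $J(R)$. Then the following are equivalent: (1) $R$ has a unique minimal prime ideal; (2) for every $d\in R\setminus J(R)$, the annihilator $(0:d)$ is contained in $J(R)$.
   Context: All rings are commutative with identity. $R$ is arithmetic if $R_M$ is a valuation ring (ideals totally ordered by inclusion) for every maximal ideal $M$. *)

theory Defs
  imports "HOL-Algebra.Algebra"
begin

definition loc_rel :: "('a, 'b) ring_scheme \<Rightarrow> 'a set \<Rightarrow> (('a \<times> 'a) \<times> ('a \<times> 'a)) set" where
  "loc_rel R M = {((a, s), (b, t)). a \<in> carrier R \<and> b \<in> carrier R \<and>
      s \<in> carrier R - M \<and> t \<in> carrier R - M \<and>
      (\<exists>u \<in> carrier R - M. u \<otimes>\<^bsub>R\<^esub> ((a \<otimes>\<^bsub>R\<^esub> t) \<ominus>\<^bsub>R\<^esub> (b \<otimes>\<^bsub>R\<^esub> s)) = \<zero>\<^bsub>R\<^esub>)}"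

definition loc_class :: "('a, 'b) ring_scheme \<Rightarrow> 'a set \<Rightarrow> 'a \<times> 'a \<Rightarrow> ('a \<times> 'a) set" where
  "loc_class R M p = loc_rel R M `` {p}"

definition loc_rep :: "('a \<times> 'a) set \<Rightarrow> 'a \<times> 'a" where
  "loc_rep A = (SOME p. p \<in> A)"

definition localization :: "('a, 'b) ring_scheme \<Rightarrow> 'a set \<Rightarrow> (('a \<times> 'a) set) ring" where
  "localization R M =
     \<lparr> carrier = (carrier R \<times> (carrier R - M)) // loc_rel R M,
       monoid.mult = (\<lambda>A B. loc_class R M
          (fst (loc_rep A) \<otimes>\<^bsub>R\<^esub> fst (loc_rep B), snd (loc_rep A) \<otimes>\<^bsub>R\<^esub> snd (loc_rep B))),
       one = loc_class R M (\<one>\<^bsub>R\<^esub>, \<one>\<^bsub>R\<^esub>),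
       ring.zero = loc_class R M (\<zero>\<^bsub>R\<^esub>, \<one>\<^bsub>R\<^esub>),
       add = (\<lambda>A B. loc_class R M
          ((fst (loc_rep A) \<otimes>\<^bsub>R\<^esub> snd (loc_rep B)) \<oplus>\<^bsub>R\<^esub> (fst (loc_rep B) \<otimes>\<^bsub>R\<^esub> snd (loc_rep A)),
           snd (loc_rep A) \<otimes>\<^bsub>R\<^esub> snd (loc_rep B))) \<rparr>"

definition valuation_ring :: "('c, 'd) ring_scheme \<Rightarrow> bool" where
  "valuation_ring S \<longleftrightarrow> cring S \<and>
     (\<forall>I J. ideal I S \<and> ideal J S \<longrightarrow> I \<subseteq> J \<or> J \<subseteq> I)"

definition arithmetic_ring :: "('a, 'b) ring_scheme \<Rightarrow> bool" where
  "arithmetic_ring R \<longleftrightarrow> cring R \<and>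
     (\<forall>M. maximalideal M R \<longrightarrow> valuation_ring (localization R M))"

definition jacobson_radical :: "('a, 'b) ring_scheme \<Rightarrow> 'a set" where
  "jacobson_radical R = {x \<in> carrier R. \<forall>M. maximalideal M R \<longrightarrow> x \<in> M}"

definition annihilator :: "('a, 'b) ring_scheme \<Rightarrow> 'a \<Rightarrow> 'a set" where
  "annihilator R d = {x \<in> carrier R. x \<otimes>\<^bsub>R\<^esub> d = \<zero>\<^bsub>R\<^esub>}"

definition minimal_prime :: "('a, 'b) ring_scheme \<Rightarrow> 'a set \<Rightarrow> bool" where
  "minimal_prime R P \<longleftrightarrow> primeideal P R \<and>
     (\<forall>Q. primeideal Q R \<and> Q \<subseteq> P \<longrightarrow> Q = P)"

end

theory Submission
  imports Defs
begin

text \<open>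
  For a maximal ideal \<open>M\<close>, the valuation property of \<open>R\<^sub>M\<close> is only used in the form
  "for all \<open>a, b\<close> there is \<open>t \<notin> M\<close> with \<open>t a \<in> R b\<close> or \<open>t b \<in> R a\<close>".
  This makes \<open>N\<^sub>M = {r. (t r)\<^sup>n = 0 for some t \<notin> M, n}\<close>, the preimage of the nilradical of
  \<open>R\<^sub>M\<close>, a prime ideal; as it lies in every prime contained in \<open>M\<close>, it is the unique minimal
  prime below \<open>M\<close>. Hence \<open>R\<close> has a unique minimal prime iff \<open>N\<^sub>M \<subseteq> M'\<close> for all maximal
  \<open>M, M'\<close>. That is equivalent to (2): if \<open>x d = 0\<close> with \<open>x \<notin> M\<close> then \<open>d \<in> N\<^sub>M\<close>; conversely,
  if \<open>(t r)\<^sup>n = 0\<close> with \<open>t \<notin> M\<close> and \<open>r \<notin> M'\<close>, then \<open>t\<^sup>n\<close> annihilates \<open>r\<^sup>n \<notin> J(R)\<close>,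
  so \<open>t\<^sup>n \<in> J(R) \<subseteq> M\<close>.
\<close>

lemma (in ring) eq_if_annihilates_diff:
  assumes "u \<otimes> (x \<ominus> y) = \<zero>" and "u \<in> carrier R" "x \<in> carrier R" "y \<in> carrier R"
  shows "u \<otimes> x = u \<otimes> y"
proof -
  have "u \<otimes> (x \<ominus> y) = u \<otimes> x \<ominus> u \<otimes> y"
    using assms(2-4) by algebra
  then show ?thesis
    using assms by (metis m_closed r_right_minus_eq)
qed

lemma (in primeideal) m_closed_compl:
  "a \<in> carrier R - I \<Longrightarrow> b \<in> carrier R - I \<Longrightarrow> a \<otimes> b \<in> carrier R - I"
  using I_prime by auto

lemma (in primeideal) one_notin: "\<one> \<in> carrier R - I"
  using I_notcarr one_imp_carrier by auto

lemma (in primeideal) pow_mem_imp_mem: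
  assumes "x \<in> carrier R" and "x [^] (n::nat) \<in> I"
  shows "x \<in> I"
  using assms(2)
proof (induction n)
  case 0
  then show ?case using one_notin by simp
next
  case (Suc n)
  then show ?case using I_prime[of "x [^] n" x] assms(1) by auto
qed

lemma (in ring) exists_maximalideal:
  assumes "ideal I R" and "\<one> \<notin> I"
  shows "\<exists>M. maximalideal M R \<and> I \<subseteq> M"
proof -
  define \<A> where "\<A> = {J. ideal J R \<and> I \<subseteq> J \<and> \<one> \<notin> J}"
  have "\<Union>\<C> \<in> \<A>" if "\<C> \<noteq> {}" and "subset.chain \<A> \<C>" for \<C>
  proof -
    have "subset.chain {J. ideal J R} \<C>"
      using that(2) unfolding subset_chain_def \<A>_def by blast
    then have "ideal (\<Union>\<C>) R"
      using chain_Union_is_ideal that(1) by presburger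
    then show ?thesis
      using that unfolding subset_chain_def \<A>_def by blast
  qed
  moreover have "I \<in> \<A>"
    using assms unfolding \<A>_def by blast
  ultimately obtain M where M: "M \<in> \<A>" and max: "\<And>J. J \<in> \<A> \<Longrightarrow> M \<subseteq> J \<Longrightarrow> J = M"
    using subset_Zorn_nonempty[of \<A>] by blast
  have "maximalideal M R"
  proof (rule maximalidealI)
    show "ideal M R" and "carrier R \<noteq> M"
      using M unfolding \<A>_def by auto
    show "J = M \<or> J = carrier R" if "ideal J R" "M \<subseteq> J" "J \<subseteq> carrier R" for J
      using that M max[of J] ideal.one_imp_carrier[OF that(1)] unfolding \<A>_def by blast
  qed
  then show ?thesis
    using M unfolding \<A>_def by blast
qed

lemma loc_rel_refl:
  assumes "ring R" and "x \<in> carrier R" and "s \<in> carrier R - M"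
  shows "((x, s), (x, s)) \<in> loc_rel R M"
proof -
  interpret ring R by fact
  show ?thesis
    using assms unfolding loc_rel_def by (auto simp: a_minus_def r_neg intro!: bexI[where x = s])
qed

lemma loc_class_in_carrier:
  assumes "x \<in> carrier R" and "s \<in> carrier R - M"
  shows "loc_class R M (x, s) \<in> carrier (localization R M)"
  using assms unfolding localization_def loc_class_def by (auto intro: quotientI)

lemma loc_carrier_subset:
  "A \<in> carrier (localization R M) \<Longrightarrow> A \<subseteq> carrier R \<times> (carrier R - M)"
  unfolding localization_def loc_rel_def by (auto elim!: quotientE)

lemma loc_rep_in_class:
  assumes "ring R" and "A \<in> carrier (localization R M)"
  shows "loc_rep A \<in> A"
proof -
  from assms(2) obtain p where p: "p \<in> carrier R \<times> (carrier R - M)" and A: "A = loc_rel R M `` {p}"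
    by (auto simp: localization_def elim!: quotientE)
  have "p \<in> A"
    using p loc_rel_refl[OF assms(1)] unfolding A by auto
  then show ?thesis
    unfolding loc_rep_def by (rule someI)
qed

lemma loc_dvd_imp_local_dvd:
  fixes R (structure)
  assumes "primeideal M R" and a: "a \<in> carrier R" and b: "b \<in> carrier R"
    and C: "C \<in> carrier (localization R M)"
    and eq: "loc_class R M (a, \<one>\<^bsub>R\<^esub>) = C \<otimes>\<^bsub>localization R M\<^esub> loc_class R M (b, \<one>\<^bsub>R\<^esub>)"
  shows "\<exists>t \<in> carrier R - M. \<exists>c \<in> carrier R. t \<otimes>\<^bsub>R\<^esub> a = c \<otimes>\<^bsub>R\<^esub> b"
proof -
  interpret primeideal M R by fact
  let ?Y = "loc_class R M (b, \<one>)"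
  have Y: "?Y \<in> carrier (localization R M)"
    by (rule loc_class_in_carrier[OF b one_notin])
  obtain c s where cs: "loc_rep C = (c, s)"
    by (cases "loc_rep C")
  with loc_rep_in_class[OF ring_axioms C] loc_carrier_subset[OF C]
  have c: "c \<in> carrier R" and s: "s \<in> carrier R - M"
    by auto
  obtain b' t' where bt: "loc_rep ?Y = (b', t')"
    by (cases "loc_rep ?Y")
  with loc_rep_in_class[OF ring_axioms Y] have "((b, \<one>), (b', t')) \<in> loc_rel R M"
    unfolding loc_class_def by simp
  then obtain u where b': "b' \<in> carrier R" and t': "t' \<in> carrier R - M"
    and u: "u \<in> carrier R - M" "u \<otimes> (b \<otimes> t' \<ominus> b' \<otimes> \<one>) = \<zero>"
    unfolding loc_rel_def by auto
  have "C \<otimes>\<^bsub>localization R M\<^esub> ?Y = loc_class R M (c \<otimes> b', s \<otimes> t')"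
    using cs bt by (simp add: localization_def)
  moreover have "(a, \<one>) \<in> loc_class R M (a, \<one>)"
    using loc_rel_refl[OF ring_axioms a one_notin] unfolding loc_class_def by simp
  ultimately have "((c \<otimes> b', s \<otimes> t'), (a, \<one>)) \<in> loc_rel R M"
    using eq unfolding loc_class_def by simp
  then obtain v where v: "v \<in> carrier R - M" "v \<otimes> (c \<otimes> b' \<otimes> \<one> \<ominus> a \<otimes> (s \<otimes> t')) = \<zero>"
    unfolding loc_rel_def by auto
  have ub: "u \<otimes> (b \<otimes> t') = u \<otimes> b'"
    using eq_if_annihilates_diff[OF u(2)] u b b' t' by simp
  have va: "v \<otimes> (c \<otimes> b') = v \<otimes> (a \<otimes> (s \<otimes> t'))"
    using eq_if_annihilates_diff[OF v(2)] v a b' t' c s by simp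
  have "(u \<otimes> v \<otimes> s \<otimes> t') \<otimes> a = u \<otimes> (v \<otimes> (a \<otimes> (s \<otimes> t')))"
    using u v c s t' a by (simp add: m_ac)
  also have "\<dots> = u \<otimes> (v \<otimes> (c \<otimes> b'))"
    using va by simp
  also have "\<dots> = v \<otimes> c \<otimes> (u \<otimes> b')"
    using u v c b' by (simp add: m_ac)
  also have "\<dots> = v \<otimes> c \<otimes> (u \<otimes> (b \<otimes> t'))"
    using ub by simp
  also have "\<dots> = (u \<otimes> v \<otimes> c \<otimes> t') \<otimes> b"
    using u v c s t' b by (simp add: m_ac)
  finally have "(u \<otimes> v \<otimes> s \<otimes> t') \<otimes> a = (u \<otimes> v \<otimes> c \<otimes> t') \<otimes> b" .
  moreover have "u \<otimes> v \<otimes> s \<otimes> t' \<in> carrier R - M"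
    by (intro m_closed_compl u(1) v(1) s t')
  moreover have "u \<otimes> v \<otimes> c \<otimes> t' \<in> carrier R"
    using u v c t' by simp
  ultimately show ?thesis
    by blast
qed

lemma valuation_loc_imp_local_comparable:
  fixes R (structure)
  assumes "primeideal M R" and "valuation_ring (localization R M)"
    and a: "a \<in> carrier R" and b: "b \<in> carrier R"
  shows "\<exists>t \<in> carrier R - M. \<exists>c \<in> carrier R. t \<otimes> a = c \<otimes> b \<or> t \<otimes> b = c \<otimes> a"
proof -
  interpret primeideal M R by fact
  let ?S = "localization R M"
  interpret S: cring ?S
    using assms(2) unfolding valuation_ring_def by blast
  let ?X = "loc_class R M (a, \<one>)" and ?Y = "loc_class R M (b, \<one>)"
  have X: "?X \<in> carrier ?S" and Y: "?Y \<in> carrier ?S"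
    using loc_class_in_carrier[OF a one_notin] loc_class_in_carrier[OF b one_notin] by auto
  have "PIdl\<^bsub>?S\<^esub> ?X \<subseteq> PIdl\<^bsub>?S\<^esub> ?Y \<or> PIdl\<^bsub>?S\<^esub> ?Y \<subseteq> PIdl\<^bsub>?S\<^esub> ?X"
    using assms(2) S.cgenideal_ideal[OF X] S.cgenideal_ideal[OF Y] unfolding valuation_ring_def by blast
  then show ?thesis
  proof
    assume "PIdl\<^bsub>?S\<^esub> ?X \<subseteq> PIdl\<^bsub>?S\<^esub> ?Y"
    with S.cgenideal_self[OF X] obtain C where "C \<in> carrier ?S" "?X = C \<otimes>\<^bsub>?S\<^esub> ?Y"
      unfolding cgenideal_def by auto
    from loc_dvd_imp_local_dvd[OF assms(1) a b this] show ?thesis by blast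
  next
    assume "PIdl\<^bsub>?S\<^esub> ?Y \<subseteq> PIdl\<^bsub>?S\<^esub> ?X"
    with S.cgenideal_self[OF Y] obtain C where "C \<in> carrier ?S" "?Y = C \<otimes>\<^bsub>?S\<^esub> ?X"
      unfolding cgenideal_def by auto
    from loc_dvd_imp_local_dvd[OF assms(1) b a this] show ?thesis by blast
  qed
qed

text \<open>The preimage in \<open>R\<close> of the nilradical of \<open>R\<^sub>M\<close>: \<open>r/1\<close> is nilpotent in \<open>R\<^sub>M\<close>.\<close>

definition loc_nilradical :: "('a, 'b) ring_scheme \<Rightarrow> 'a set \<Rightarrow> 'a set" where
  "loc_nilradical R M =
     {r \<in> carrier R. \<exists>t \<in> carrier R - M. \<exists>n::nat. (t \<otimes>\<^bsub>R\<^esub> r) [^]\<^bsub>R\<^esub> n = \<zero>\<^bsub>R\<^esub>}"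

context cring
begin

lemma loc_nilradical_subset_prime:
  assumes "primeideal P R" and "P \<subseteq> M"
  shows "loc_nilradical R M \<subseteq> P"
proof
  interpret P: primeideal P R by fact
  fix r assume "r \<in> loc_nilradical R M"
  then obtain t n where r: "r \<in> carrier R" and t: "t \<in> carrier R - M" and "(t \<otimes> r) [^] (n::nat) = \<zero>"
    unfolding loc_nilradical_def by auto
  then have "t \<otimes> r \<in> P"
    using P.pow_mem_imp_mem[of "t \<otimes> r" n] P.I_prime by simp
  then show "r \<in> P"
    using P.I_prime[of t r] t r assms(2) by auto
qed

lemma loc_nilradical_dvd_closed:
  assumes "primeideal M R" and b: "b \<in> loc_nilradical R M" and w: "w \<in> carrier R - M"
    and x: "x \<in> carrier R" and k: "k \<in> carrier R" and eq: "w \<otimes> x = k \<otimes> b"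
  shows "x \<in> loc_nilradical R M"
proof -
  obtain t n where t: "t \<in> carrier R - M" and tb: "(t \<otimes> b) [^] (n::nat) = \<zero>" and bc: "b \<in> carrier R"
    using b unfolding loc_nilradical_def by auto
  have "(t \<otimes> w \<otimes> x) [^] n = (k \<otimes> (t \<otimes> b)) [^] n"
    using t w x k bc eq by (metis DiffD1 m_assoc m_lcomm)
  also have "\<dots> = \<zero>"
    using tb t k bc by (simp add: nat_pow_distrib)
  finally show ?thesis
    using x primeideal.m_closed_compl[OF assms(1) t w] unfolding loc_nilradical_def by blast
qed

lemma loc_nilradical_if_square:
  assumes "x \<in> carrier R" and "x \<otimes> x \<in> loc_nilradical R M"
  shows "x \<in> loc_nilradical R M"
proof -
  obtain t n where t: "t \<in> carrier R - M" and tx: "(t \<otimes> (x \<otimes> x)) [^] (n::nat) = \<zero>"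
    using assms(2) unfolding loc_nilradical_def by auto
  have "(t \<otimes> x) [^] (n + n) = ((t \<otimes> x) \<otimes> (t \<otimes> x)) [^] n"
    using t assms(1) by (metis DiffD1 m_closed nat_pow_distrib nat_pow_mult)
  also have "\<dots> = (t \<otimes> (t \<otimes> (x \<otimes> x))) [^] n"
    using t assms(1) by (simp add: m_ac)
  also have "\<dots> = \<zero>"
    using t assms(1) tx by (simp add: nat_pow_distrib)
  finally show ?thesis
    using assms(1) t unfolding loc_nilradical_def by blast
qed

lemma annihilator_subset_jacobson_iff:
  "(\<forall>d \<in> carrier R - jacobson_radical R. annihilator R d \<subseteq> jacobson_radical R) \<longleftrightarrow>
    (\<forall>M M'. maximalideal M R \<longrightarrow> maximalideal M' R \<longrightarrow> loc_nilradical R M \<subseteq> M')"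
proof
  assume ann: "\<forall>d \<in> carrier R - jacobson_radical R. annihilator R d \<subseteq> jacobson_radical R"
  show "\<forall>M M'. maximalideal M R \<longrightarrow> maximalideal M' R \<longrightarrow> loc_nilradical R M \<subseteq> M'"
  proof (intro allI impI subsetI)
    fix M M' r assume M: "maximalideal M R" and M': "maximalideal M' R" and "r \<in> loc_nilradical R M"
    then obtain t n where r: "r \<in> carrier R" and t: "t \<in> carrier R - M"
      and tr: "(t \<otimes> r) [^] (n::nat) = \<zero>"
      unfolding loc_nilradical_def by auto
    show "r \<in> M'"
    proof (rule ccontr)
      assume "r \<notin> M'"
      then have "r [^] n \<in> carrier R - jacobson_radical R"
        using primeideal.pow_mem_imp_mem[OF maximalideal_prime[OF M'] r] r M'
        unfolding jacobson_radical_def by auto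
      moreover have "t [^] n \<in> annihilator R (r [^] n)"
        using tr t r unfolding annihilator_def by (simp add: nat_pow_distrib)
      ultimately have "t [^] n \<in> M"
        using ann M unfolding jacobson_radical_def by blast
      then show False
        using primeideal.pow_mem_imp_mem[OF maximalideal_prime[OF M]] t by blast
    qed
  qed
next
  assume sub: "\<forall>M M'. maximalideal M R \<longrightarrow> maximalideal M' R \<longrightarrow> loc_nilradical R M \<subseteq> M'"
  show "\<forall>d \<in> carrier R - jacobson_radical R. annihilator R d \<subseteq> jacobson_radical R"
  proof (intro ballI subsetI)
    fix d x assume d: "d \<in> carrier R - jacobson_radical R" and x: "x \<in> annihilator R d"
    then obtain M' where M': "maximalideal M' R" "d \<notin> M'"
      unfolding jacobson_radical_def by auto
    have "x \<in> M" if M: "maximalideal M R" for M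
    proof (rule ccontr)
      assume "x \<notin> M"
      moreover have "(x \<otimes> d) [^] (1::nat) = \<zero>" "x \<in> carrier R"
        using x d unfolding annihilator_def by auto
      ultimately have "d \<in> loc_nilradical R M"
        using d unfolding loc_nilradical_def by blast
      then show False
        using sub M M' by blast
    qed
    then show "x \<in> jacobson_radical R"
      using x unfolding annihilator_def jacobson_radical_def by auto
  qed
qed

end

locale locally_comparable = cring +
  assumes local_comparable: "\<lbrakk>maximalideal M R; a \<in> carrier R; b \<in> carrier R\<rbrakk> \<Longrightarrow>
    \<exists>t \<in> carrier R - M. \<exists>c \<in> carrier R. t \<otimes> a = c \<otimes> b \<or> t \<otimes> b = c \<otimes> a"

lemma arithmetic_ring_imp_locally_comparable:
  fixes R (structure)
  assumes "arithmetic_ring R"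
  shows "locally_comparable R"
proof -
  interpret cring R
    using assms unfolding arithmetic_ring_def by blast
  show ?thesis
  proof
    fix M a b assume M: "maximalideal M R" and "a \<in> carrier R" "b \<in> carrier R"
    moreover have "valuation_ring (localization R M)"
      using assms M unfolding arithmetic_ring_def by blast
    ultimately show "\<exists>t \<in> carrier R - M. \<exists>c \<in> carrier R. t \<otimes> a = c \<otimes> b \<or> t \<otimes> b = c \<otimes> a"
      by (intro valuation_loc_imp_local_comparable maximalideal_prime)
  qed
qed

context locally_comparable
begin

lemma loc_nilradical_add:
  assumes M: "maximalideal M R" and a: "a \<in> loc_nilradical R M" and b: "b \<in> loc_nilradical R M"
  shows "a \<oplus> b \<in> loc_nilradical R M"
proof -
  have P: "primeideal M R"
    using M by (rule maximalideal_prime)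
  have ac: "a \<in> carrier R" and bc: "b \<in> carrier R"
    using a b unfolding loc_nilradical_def by auto
  obtain t c where t: "t \<in> carrier R - M" and c: "c \<in> carrier R"
    and comparable: "t \<otimes> a = c \<otimes> b \<or> t \<otimes> b = c \<otimes> a"
    using local_comparable[OF M ac bc] by blast
  from comparable show ?thesis
  proof
    assume "t \<otimes> a = c \<otimes> b"
    then have "t \<otimes> (a \<oplus> b) = (c \<oplus> t) \<otimes> b"
      using t c ac bc by (simp add: r_distr l_distr)
    from loc_nilradical_dvd_closed[OF P b t _ _ this] show ?thesis
      using t c ac bc by simp
  next
    assume "t \<otimes> b = c \<otimes> a"
    then have "t \<otimes> (a \<oplus> b) = (c \<oplus> t) \<otimes> a"
      using t c ac bc by (simp add: r_distr l_distr a_comm)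
    from loc_nilradical_dvd_closed[OF P a t _ _ this] show ?thesis
      using t c ac bc by simp
  qed
qed

lemma loc_nilradical_ideal:
  assumes M: "maximalideal M R"
  shows "ideal (loc_nilradical R M) R"
proof -
  interpret M: primeideal M R
    using M by (rule maximalideal_prime)
  have mult: "k \<otimes> b \<in> loc_nilradical R M" if "b \<in> loc_nilradical R M" "k \<in> carrier R" for b k
    using loc_nilradical_dvd_closed[OF M.primeideal that(1) M.one_notin, of "k \<otimes> b" k] that
    unfolding loc_nilradical_def by auto
  have sub: "loc_nilradical R M \<subseteq> carrier R"
    unfolding loc_nilradical_def by auto
  show ?thesis
  proof (rule idealI)
    show "subgroup (loc_nilradical R M) (add_monoid R)"
    proof (rule add.subgroupI)
      have "(\<one> \<otimes> \<zero>) [^] (1::nat) = \<zero>"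
        by simp
      then show "loc_nilradical R M \<noteq> {}"
        using M.one_notin unfolding loc_nilradical_def by blast
      show "\<ominus> a \<in> loc_nilradical R M" if "a \<in> loc_nilradical R M" for a
        using mult[OF that, of "\<ominus> \<one>"] that sub l_minus by auto
    qed (use sub loc_nilradical_add[OF M] in auto)
    show "x \<otimes> a \<in> loc_nilradical R M" "a \<otimes> x \<in> loc_nilradical R M"
      if "a \<in> loc_nilradical R M" "x \<in> carrier R" for a x
      using mult[OF that] that sub m_comm by auto
  qed (rule ring_axioms)
qed

lemma loc_nilradical_prime:
  assumes M: "maximalideal M R"
  shows "primeideal (loc_nilradical R M) R"
proof -
  interpret M: primeideal M R
    using M by (rule maximalideal_prime)
  have left_factor_mem: "a \<in> loc_nilradical R M"
    if a: "a \<in> carrier R" and b: "b \<in> carrier R" and ab: "a \<otimes> b \<in> loc_nilradical R M"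
      and u: "u \<in> carrier R - M" and c: "c \<in> carrier R" and eq: "u \<otimes> a = c \<otimes> b" for a b u c
  proof -
    have "u \<otimes> (a \<otimes> a) = c \<otimes> (a \<otimes> b)"
      using eq a b u c by (metis DiffD1 m_assoc m_lcomm)
    then have "a \<otimes> a \<in> loc_nilradical R M"
      using loc_nilradical_dvd_closed[OF M.primeideal ab u] a c by simp
    then show ?thesis
      using loc_nilradical_if_square a by blast
  qed
  show ?thesis
  proof (rule primeidealI)
    show "ideal (loc_nilradical R M) R"
      using M by (rule loc_nilradical_ideal)
    show "carrier R \<noteq> loc_nilradical R M"
      using loc_nilradical_subset_prime[OF M.primeideal] M.one_notin by blast
    fix a b assume a: "a \<in> carrier R" and b: "b \<in> carrier R" and ab: "a \<otimes> b \<in> loc_nilradical R M"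
    have ba: "b \<otimes> a \<in> loc_nilradical R M"
      using ab a b m_comm by simp
    obtain u c where "u \<in> carrier R - M" "c \<in> carrier R" "u \<otimes> a = c \<otimes> b \<or> u \<otimes> b = c \<otimes> a"
      using local_comparable[OF M a b] by blast
    then show "a \<in> loc_nilradical R M \<or> b \<in> loc_nilradical R M"
      using left_factor_mem[OF a b ab] left_factor_mem[OF b a ba] by blast
  qed (rule is_cring)
qed

lemma minimal_prime_iff_loc_nilradical:
  "minimal_prime R P \<longleftrightarrow> (\<exists>M. maximalideal M R \<and> P = loc_nilradical R M)"
proof
  assume P: "minimal_prime R P"
  then interpret P: primeideal P R
    unfolding minimal_prime_def by blast
  obtain M where M: "maximalideal M R" "P \<subseteq> M"
    using exists_maximalideal[OF P.is_ideal] P.one_notin by blast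
  then show "\<exists>M. maximalideal M R \<and> P = loc_nilradical R M"
    using P loc_nilradical_subset_prime[OF P.primeideal M(2)] loc_nilradical_prime[OF M(1)]
    unfolding minimal_prime_def by blast
next
  assume "\<exists>M. maximalideal M R \<and> P = loc_nilradical R M"
  then obtain M where M: "maximalideal M R" and P: "P = loc_nilradical R M"
    by blast
  have "loc_nilradical R M \<subseteq> Q" if "primeideal Q R" "Q \<subseteq> loc_nilradical R M" for Q
    using that loc_nilradical_subset_prime[OF maximalideal_prime[OF M] order_refl]
      loc_nilradical_subset_prime[of Q M] by blast
  then show "minimal_prime R P"
    unfolding minimal_prime_def P using loc_nilradical_prime[OF M] by blast
qed

lemma unique_minimal_prime_iff:
  assumes "\<one> \<noteq> \<zero>"
  shows "(\<exists>!P. minimal_prime R P) \<longleftrightarrow>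
    (\<forall>M M'. maximalideal M R \<longrightarrow> maximalideal M' R \<longrightarrow> loc_nilradical R M \<subseteq> M')"
proof
  assume "\<exists>!P. minimal_prime R P"
  then have "loc_nilradical R M = loc_nilradical R M'"
    if "maximalideal M R" "maximalideal M' R" for M M'
    using that minimal_prime_iff_loc_nilradical by blast
  then show "\<forall>M M'. maximalideal M R \<longrightarrow> maximalideal M' R \<longrightarrow> loc_nilradical R M \<subseteq> M'"
    using loc_nilradical_subset_prime[OF maximalideal_prime order_refl] by blast
next
  assume sub: "\<forall>M M'. maximalideal M R \<longrightarrow> maximalideal M' R \<longrightarrow> loc_nilradical R M \<subseteq> M'"
  have eq: "loc_nilradical R M = loc_nilradical R M'"
    if "maximalideal M R" "maximalideal M' R" for M M'
    using that sub loc_nilradical_prime loc_nilradical_subset_prime by (metis subset_antisym)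
  obtain M0 where "maximalideal M0 R"
    using exists_maximalideal[OF zeroideal] assms by blast
  then show "\<exists>!P. minimal_prime R P"
    using eq minimal_prime_iff_loc_nilradical by metis
qed

end

theorem proposition3p7:
  fixes R :: "('a, 'b) ring_scheme"
  assumes "cring R"
    and "\<one>\<^bsub>R\<^esub> \<noteq> \<zero>\<^bsub>R\<^esub>"
    and "arithmetic_ring R"
  shows "(\<exists>!P. minimal_prime R P) \<longleftrightarrow>
         (\<forall>d \<in> carrier R - jacobson_radical R. annihilator R d \<subseteq> jacobson_radical R)"
proof -
  interpret locally_comparable R
    using assms(3) by (rule arithmetic_ring_imp_locally_comparable)
  show ?thesis
    using unique_minimal_prime_iff[OF assms(2)] annihilator_subset_jacobson_iff by simp
qed

end
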